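(* The function $\kappa\mapsto\Gamma(\kappa,0)$ does not vanish on $(0,\infty)\setminus I_*$, where $I_*:=(0.380337,\,0.380338)$.
   Context: For each $\kappa>0$, $\Gamma(\kappa,0):=\lim_{\ell\to0}\Gamma_\ell$ is the value at $\ell=0$ of the analytic extension of $\ell\mapsto\Gamma_\ell$, where $\Gamma_\ell$ (small $\ell\ne0$) is defined as follows. Set $T:=2\pi/\kappa$, $\mu_0:=\kappa/\tanh(\kappa)$, $H^s_{\rm per}:=H^s(\mathbb R/T\mathbb Z)$. For a sufficiently regular $\eta$ with $1+\eta>0$, $G[1+\eta]\psi:=(\partial_z\phi-\nabla\eta\cdot\nabla\phi)|_{z=1+\eta}$, $\nabla=(\partial_x,\partial_y)$, where $\phi$ is the bounded solution of $\Delta_{x,y,z}\phi=0$ in $\{0<z<1+\eta(x,y)\}$, $\partial_z\phi(\cdot,\cdot,0)=0$, $\phi|_{z=1+\eta}=\psi$. Let $\varepsilon\mapsto(\underline\eta_\varepsilon,\underline\psi_\varepsilon,\underline\mu_\varepsilon)$ be the analytic family of small-amplitude $T$-periodic Stokes waves: the unique solution of $\underline\eta'+G[1+\underline\eta]\underline\psi=0$, $\underline\psi'-\underline\mu\,\underline\eta=\frac12(\underline\psi')^2-\frac12\frac{(G[1+\underline\eta]\underline\psi+\underline\eta'\underline\psi')^2}{1+(\underline\eta')^2}$ with $\|(\underline\eta,\underline\psi)-\varepsilon(\sinh(\kappa)\cos(\kappa\cdot),\cosh(\kappa)\sin(\kappa\cdot))\|_{H^{s_0}_{\rm per}}+|\underline\mu-\mu_0|\le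 K_0\varepsilon^2$. Set $\underline B_\varepsilon:=\frac{\underline\psi_\varepsilon'-1}{1+(\underline\eta_\varepsilon')^2}\underline\eta_\varepsilon'$, $\underline V_\varepsilon:=\underline\psi'_\varepsilon-\underline B_\varepsilon\underline\eta_\varepsilon'$, $\underline a_\varepsilon:=\underline\mu_\varepsilon-\mu_0-(1-\underline V_\varepsilon)\underline B_\varepsilon'$, $G_{\ell,\xi}[1+\underline\eta_\varepsilon]\psi(x):=e^{-i\xi x-i\ell y}G[1+\underline\eta_\varepsilon]\big((x',y')\mapsto e^{i\xi x'+i\ell y'}\psi(x')\big)(x,y)$ and $L^\varepsilon_{\ell,\xi}:=\begin{pmatrix}(\partial_x+i\xi)((1-\underline V_\varepsilon)\,\cdot\,) & G_{\ell,\xi}[1+\underline\eta_\varepsilon]\\ -(\mu_0+\underline a_\varepsilon) & (1-\underline V_\varepsilon)(\partial_x+i\xi)\end{pmatrix}$ on $L^2_{\rm per}\times H^{1/2}_{\rm per}$. Let $F$ be the odd analytic function with $F(r)=\sqrt{r\tanh r}$ for $r\ge0$, $|n\kappa|_{\ell,\xi}:=\sqrt{(n\kappa+\xi)^2+\ell^2}$, $\lambda^\pm_{n,\ell,\xi}:=i(n\kappa+\xi\pm\sqrt{\mu_0}F(|n\kappa|_{\ell,\xi}))$, and $\xi_+$ the odd analytic function near $0$ with $\xi_+'(0)>0$ and $\lambda^-_{1,\ell,\xi_+(\ell)}=\lambda^+_{-1,\ell,\xi_+(\ell)}=:i\sigma_+(\ell)$. For small $\ell\ne0$ and $|(\varepsilon,\xi-\xi_+(\ell))|\le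 c_0'|\ell|$, $L^\varepsilon_{\ell,\xi}$ has exactly two eigenvalues in $B(i\sigma_+(\ell),c_0|\ell|)$ (for suitable $c_0,c_0'>0$); let $\Pi_{\ell,\xi}(\varepsilon)$ be the associated Riesz projector and $\mathcal U_{\ell,\xi}(\varepsilon)$ the solution of $\partial_\varepsilon\mathcal U_{\ell,\xi}=[\partial_\varepsilon\Pi_{\ell,\xi},\Pi_{\ell,\xi}]\mathcal U_{\ell,\xi}$, $\mathcal U_{\ell,\xi}(0)=I$. Set $\alpha_\pm(\ell,\xi):=F(|\mp\kappa|_{\ell,\xi})/\sqrt{\mu_0}$, $q_-^0(\ell,\xi,x):=e^{i\kappa x}(i\alpha_-(\ell,\xi),1)^T$, $q_+^0(\ell,\xi,x):=e^{-i\kappa x}(-i\alpha_+(\ell,\xi),1)^T$, $q_\pm^\varepsilon:=\mathcal U_{\ell,\xi}(\varepsilon)q_\pm^0$, $J:=\begin{pmatrix}0&-1\\1&0\end{pmatrix}$, $A^\varepsilon_{\ell,\xi}:=J^{-1}L^\varepsilon_{\ell,\xi}$, $\langle f,g\rangle:=\frac1T\int_0^T\overline{f(x)}\cdot g(x)\,dx$, $a(\ell,\xi,\varepsilon):=\langle q_+^\varepsilon,A^\varepsilon_{\ell,\xi}q_-^\varepsilon\rangle$, $\Gamma_\ell:=\frac12\partial_\varepsilon^2a(\ell,\xi_+(\ell),0)$. (Explicitly, with $s=\sinh\kappa$, $c=\cosh\kappa$, $\Gamma(\kappa,0)=\frac{\kappa^3}{8csD(\kappa)}\big(\kappa^3(64s^8+144s^6+144s^4+94s^2+9)-\kappa^2cs(24s^4+40s^2+27)+\kappa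 s^2(1+s^2)(48s^6+40s^4+2s^2+27)-cs^3(1+s^2)(40s^4+56s^2+9)\big)$ with $D(\kappa)=\kappa^3(8s^4+10s^2+1)-3\kappa^2cs+3\kappa s^2(1+s^2)(2s^2+1)-cs^3(1+s^2)$.) *)

theory Defs
  imports Complex_Main
begin

definition D_den :: "real \<Rightarrow> real" where
  "D_den k = (let s = sinh k; c = cosh k in
     k^3 * (8*s^4 + 10*s^2 + 1) - 3*k^2*c*s + 3*k*s^2*(1+s^2)*(2*s^2+1) - c*s^3*(1+s^2))"

definition Gamma0 :: "real \<Rightarrow> real" where
  "Gamma0 k = (let s = sinh k; c = cosh k in
     k^3 / (8*c*s*D_den k) *
     (k^3 * (64*s^8 + 144*s^6 + 144*s^4 + 94*s^2 + 9)
      - k^2*c*s*(24*s^4 + 40*s^2 + 27)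
      + k*s^2*(1+s^2)*(48*s^6 + 40*s^4 + 2*s^2 + 27)
      - c*s^3*(1+s^2)*(40*s^4 + 56*s^2 + 9)))"

end

theory Submission
  imports Defs
begin

text \<open>
  Write \<open>Gamma0 k = k^3 N(k) / (8 cosh k sinh k D(k))\<close>. Rewriting the powers of
  \<open>sinh k\<close> and \<open>cosh k\<close> through multiple angles turns \<open>N\<close> and \<open>D\<close> into finite
  combinations of \<open>k^p sinh (m k)\<close> and \<open>k^p cosh (m k)\<close>, hence into power series with
  explicit coefficients. Every coefficient of \<open>D\<close> is nonnegative and that of \<open>k^5\<close> is 16,
  so \<open>D > 0\<close> for \<open>k > 0\<close>. The series of \<open>N\<close> starts with \<open>-16 k^7\<close> and all later
  coefficients are nonnegative, so \<open>N(k)/k^7\<close> is nondecreasing and \<open>N\<close> changes sign at most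
  once on \<open>(0,\<infinity>)\<close>. Evaluating the truncated series at the two endpoints of \<open>I\<^sub>*\<close>, with
  the tail controlled by \<open>N(1)\<close>, shows \<open>N < 0\<close> at the left one and \<open>N > 0\<close> at the right one.
\<close>

text \<open>\<open>hyp_term p m k\<close> is \<open>2 k^p sinh (m k)\<close> for even \<open>p\<close> and \<open>2 k^p cosh (m k)\<close> for odd \<open>p\<close>;
  in both cases only odd powers of \<open>k\<close> occur in its Taylor series.\<close>

definition hyp_term :: "nat \<Rightarrow> real \<Rightarrow> real \<Rightarrow> real" where
  "hyp_term p m k = k^p * (exp (m*k) - (-1)^p * exp (-(m*k)))"

definition hyp_term_coeff :: "nat \<Rightarrow> real \<Rightarrow> nat \<Rightarrow> real" where
  "hyp_term_coeff p m n = (if p \<le> n then (1 - (-1)^n) * m^(n-p) / fact (n-p) else 0)"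

lemma hyp_term_sums: "(\<lambda>n. hyp_term_coeff p m n * k^n) sums hyp_term p m k"
proof -
  have exp_pos: "(\<lambda>j. (m*k)^j / fact j) sums exp (m*k)"
    using exp_converges[of "m*k"] by (simp add: divide_inverse mult.commute)
  have exp_neg: "(\<lambda>j. (-(m*k))^j / fact j) sums exp (-(m*k))"
    using exp_converges[of "-(m*k)"] by (simp add: divide_inverse mult.commute)
  have "(\<lambda>j. k^p * ((m*k)^j / fact j - (-1)^p * ((-(m*k))^j / fact j))) sums hyp_term p m k"
    unfolding hyp_term_def by (intro sums_mult sums_diff exp_pos exp_neg)
  moreover have "k^p * ((m*k)^j / fact j - (-1)^p * ((-(m*k))^j / fact j))
      = hyp_term_coeff p m (j+p) * k^(j+p)" for j
    by (simp add: hyp_term_coeff_def power_add power_mult_distrib power_minus' algebra_simps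
        diff_divide_distrib)
  ultimately have "(\<lambda>j. hyp_term_coeff p m (j+p) * k^(j+p)) sums hyp_term p m k"
    by simp
  then have "(\<lambda>n. hyp_term_coeff p m n * k^n)
      sums (hyp_term p m k + (\<Sum>n<p. hyp_term_coeff p m n * k^n))"
    by (rule iffD1[OF sums_iff_shift])
  then show ?thesis
    by (simp add: hyp_term_coeff_def)
qed

type_synonym hyp_block = "real \<times> real \<times> real \<times> real \<times> real"

definition block_fun :: "hyp_block \<Rightarrow> real \<Rightarrow> real" where
  "block_fun b k = (case b of (m, c0, c1, c2, c3) \<Rightarrow>
     c0 * hyp_term 0 m k + c1 * hyp_term 1 m k + c2 * hyp_term 2 m k + c3 * hyp_term 3 m k)"

definition block_coeff :: "hyp_block \<Rightarrow> nat \<Rightarrow> real" where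
  "block_coeff b n = (case b of (m, c0, c1, c2, c3) \<Rightarrow>
     c0 * hyp_term_coeff 0 m n + c1 * hyp_term_coeff 1 m n
     + c2 * hyp_term_coeff 2 m n + c3 * hyp_term_coeff 3 m n)"

definition blocks_fun :: "hyp_block list \<Rightarrow> real \<Rightarrow> real" where
  "blocks_fun B k = (\<Sum>b\<leftarrow>B. block_fun b k)"

definition blocks_coeff :: "hyp_block list \<Rightarrow> nat \<Rightarrow> real" where
  "blocks_coeff B n = (\<Sum>b\<leftarrow>B. block_coeff b n)"

lemma block_sums: "(\<lambda>n. block_coeff b n * k^n) sums block_fun b k"
proof -
  obtain m c0 c1 c2 c3 where b: "b = (m, c0, c1, c2, c3)"
    by (cases b) auto
  have "(\<lambda>n. c0 * (hyp_term_coeff 0 m n * k^n) + c1 * (hyp_term_coeff 1 m n * k^n)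
      + c2 * (hyp_term_coeff 2 m n * k^n) + c3 * (hyp_term_coeff 3 m n * k^n))
    sums (c0 * hyp_term 0 m k + c1 * hyp_term 1 m k + c2 * hyp_term 2 m k + c3 * hyp_term 3 m k)"
    by (intro sums_add sums_mult hyp_term_sums)
  then show ?thesis
    by (simp add: b block_fun_def block_coeff_def algebra_simps)
qed

lemma blocks_sums: "(\<lambda>n. blocks_coeff B n * k^n) sums blocks_fun B k"
proof (induction B)
  case Nil
  then show ?case by (simp add: blocks_fun_def blocks_coeff_def)
next
  case (Cons b B)
  have "(\<lambda>n. block_coeff b n * k^n + blocks_coeff B n * k^n)
      sums (block_fun b k + blocks_fun B k)"
    by (rule sums_add[OF block_sums Cons.IH])
  then show ?case
    by (simp add: blocks_fun_def blocks_coeff_def algebra_simps)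
qed

definition block_weight :: "hyp_block \<Rightarrow> nat \<Rightarrow> real" where
  "block_weight b n = (case b of (m, c0, c1, c2, c3) \<Rightarrow> m^(n-3) *
     (c0*m^3 + c1*m^2*real n + c2*m*real n*(real n - 1) + c3*real n*(real n - 1)*(real n - 2)))"

lemma block_coeff_eq_weight:
  assumes "3 \<le> n"
  shows "block_coeff b n = (1 - (-1)^n) / fact n * block_weight b n"
proof -
  obtain m c0 c1 c2 c3 where b: "b = (m, c0, c1, c2, c3)"
    by (cases b) auto
  obtain j where n: "n = j + 3"
    using assms by (metis le_add_diff_inverse2)
  define s :: real where "s = 1 - (-1)^n"
  have fact1: "(fact (j+1) :: real) = (real j + 1) * fact j"
    by (simp add: algebra_simps)
  have fact2: "(fact (j+2) :: real) = (real j + 2) * (real j + 1) * fact j"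
    by (simp add: numeral_eq_Suc algebra_simps)
  have fact3: "(fact (j+3) :: real) = (real j + 3) * (real j + 2) * (real j + 1) * fact j"
    by (simp add: numeral_eq_Suc algebra_simps)
  have coeffs: "hyp_term_coeff 0 m n = s * m^j * m^3 / fact (j+3)"
    "hyp_term_coeff 1 m n = s * m^j * m^2 / fact (j+2)"
    "hyp_term_coeff 2 m n = s * m^j * m / fact (j+1)"
    "hyp_term_coeff 3 m n = s * m^j / fact j"
    by (simp_all add: hyp_term_coeff_def s_def n power_add numeral_eq_Suc)
  have weight: "block_weight (m, c0, c1, c2, c3) n = m^j * (c0*m^3 + c1*m^2*(real j + 3)
      + c2*m*(real j + 3)*(real j + 2) + c3*(real j + 3)*(real j + 2)*(real j + 1))"
    by (simp add: block_weight_def n algebra_simps)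
  have common_denominator:
    "c0 * (s*A*m^3 / (a3*a2*a1*F)) + c1 * (s*A*m^2 / (a2*a1*F)) + c2 * (s*A*m / (a1*F))
       + c3 * (s*A / F)
     = s / (a3*a2*a1*F) * (A * (c0*m^3 + c1*m^2*a3 + c2*m*a3*a2 + c3*a3*a2*a1))"
    if "a1 > 0" "a2 > 0" "a3 > 0" "F > 0" for a1 a2 a3 F A :: real
    using that by (simp add: field_simps)
  have fact_n: "(fact n :: real) = (real j + 3) * (real j + 2) * (real j + 1) * fact j"
    using fact3 by (simp add: n)
  show ?thesis
    unfolding block_coeff_def b prod.case coeffs weight s_def[symmetric] fact_n fact1 fact2 fact3
    by (rule common_denominator) simp_all
qed

lemma blocks_coeff_nonneg:
  assumes "3 \<le> n" "\<And>b. b \<in> set B \<Longrightarrow> 0 \<le> block_weight b n"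
  shows "0 \<le> blocks_coeff B n"
proof -
  have sign: "0 \<le> 1 - (-1::real)^n"
    by (cases "even n") auto
  have "blocks_coeff B n = (\<Sum>b\<leftarrow>B. (1 - (-1)^n) / fact n * block_weight b n)"
    unfolding blocks_coeff_def using block_coeff_eq_weight[OF assms(1)]
    by (metis (no_types, lifting) map_eq_conv)
  also have "\<dots> \<ge> 0"
    using assms(2) sign by (intro sum_list_nonneg) auto
  finally show ?thesis .
qed

lemma block_weight_nonneg:
  fixes m c0 c1 c2 c3 t a dA dB dC dD :: real
  assumes "0 \<le> m" "real n = t + a" "0 \<le> t"
    and "c0*m^3 + c1*m^2*(t+a) + c2*m*(t+a)*(t+a-1) + c3*(t+a)*(t+a-1)*(t+a-2)
       = dA + dB*t + dC*t^2 + dD*t^3"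
    and "0 \<le> dA" "0 \<le> dB" "0 \<le> dC" "0 \<le> dD"
  shows "0 \<le> block_weight (m, c0, c1, c2, c3) n"
proof -
  have "block_weight (m, c0, c1, c2, c3) n = m^(n-3) * (dA + dB*t + dC*t^2 + dD*t^3)"
    using assms(2,4) by (simp add: block_weight_def)
  also have "\<dots> \<ge> 0"
    using assms by (intro mult_nonneg_nonneg add_nonneg_nonneg) auto
  finally show ?thesis .
qed

lemma partial_sum_le_sums:
  fixes a :: "nat \<Rightarrow> real"
  assumes "(\<lambda>n. a n * x^n) sums S" "0 \<le> x" "\<And>n. N \<le> n \<Longrightarrow> 0 \<le> a n"
  shows "(\<Sum>n<N. a n * x^n) \<le> S"
  using sum_le_suminf[of "\<lambda>n. a n * x^n" "{..<N}"] assms by (auto simp: sums_iff)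

lemma sums_pos_of_nonneg_coeffs:
  fixes a :: "nat \<Rightarrow> real"
  assumes "(\<lambda>n. a n * x^n) sums S" "0 < x" "\<And>n. 0 \<le> a n" "0 < a N"
  shows "0 < S"
proof -
  have "(\<Sum>n\<in>{N}. a n * x^n) \<le> S"
    using sum_le_suminf[of "\<lambda>n. a n * x^n" "{N}"] assms by (auto simp: sums_iff)
  moreover have "0 < a N * x^N"
    using assms by simp
  ultimately show ?thesis
    by simp
qed

lemma sums_le_partial_sum_plus_tail:
  fixes a :: "nat \<Rightarrow> real"
  assumes "(\<lambda>n. a n * x^n) sums S" "a sums S1" "0 \<le> x" "x \<le> 1"
    and "\<And>n. N \<le> n \<Longrightarrow> 0 \<le> a n"
  shows "S \<le> (\<Sum>n<N. a n * x^n) + x^N * (S1 - (\<Sum>n<N. a n))"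
proof -
  have tail: "(\<lambda>n. a n * x^n - x^N * a n) sums (S - x^N * S1)"
    by (intro sums_diff sums_mult assms(1,2))
  have "S - x^N * S1 \<le> (\<Sum>n<N. a n * x^n - x^N * a n)"
  proof (rule sums_le[OF _ tail sums_If_finite_set])
    fix n
    show "a n * x^n - x^N * a n \<le> (if n \<in> {..<N} then a n * x^n - x^N * a n else 0)"
    proof (cases "n < N")
      case False
      then have "a n * x^n \<le> a n * x^N"
        using assms by (intro mult_left_mono power_decreasing) auto
      with False show ?thesis
        by (simp add: algebra_simps)
    qed simp
  qed simp
  then show ?thesis
    by (simp add: sum_subtractf sum_distrib_left algebra_simps)
qed

lemma power_series_div_power_mono:
  fixes a :: "nat \<Rightarrow> real"
  assumes "(\<lambda>n. a n * k^n) sums f_k" "(\<lambda>n. a n * K^n) sums f_K"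
    and "\<And>n. n < N \<Longrightarrow> a n = 0" "\<And>n. N < n \<Longrightarrow> 0 \<le> a n"
    and "0 < k" "k \<le> K"
  shows "f_k * K^N \<le> f_K * k^N"
proof -
  have diff: "(\<lambda>n. a n * k^n * K^N - a n * K^n * k^N) sums (f_k * K^N - f_K * k^N)"
    by (intro sums_diff sums_mult2 assms(1,2))
  have "a n * k^n * K^N \<le> a n * K^n * k^N" for n
  proof (cases "N < n")
    case True
    then obtain j where n: "n = N + j"
      using less_imp_add_positive by blast
    have "k^j * (k^N * K^N) \<le> K^j * (k^N * K^N)"
      using assms(5,6) by (intro mult_right_mono power_mono) auto
    then have "k^n * K^N \<le> K^n * k^N"
      by (simp add: n power_add algebra_simps)
    from mult_left_mono[OF this assms(4)[OF True]] show ?thesis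
      by (simp add: algebra_simps)
  next
    case False
    then show ?thesis
      using assms(3)[of n] by (cases "n = N") auto
  qed
  then have "f_k * K^N - f_K * k^N \<le> 0"
    by (intro sums_le[OF _ diff sums_zero]) (simp add: algebra_simps)
  then show ?thesis
    by simp
qed

fun horner :: "real list \<Rightarrow> real \<Rightarrow> real" where
  "horner [] x = 0"
| "horner (a # as) x = a + x * horner as x"

lemma horner_eq_sum: "horner as x = (\<Sum>i<length as. as ! i * x^i)"
proof (induction as)
  case (Cons a as)
  have "(\<Sum>i<length (a # as). (a # as) ! i * x^i) = a + (\<Sum>i<length as. as ! i * x^Suc i)"
    by (simp only: length_Cons sum.lessThan_Suc_shift) simp
  then show ?case
    using Cons by (simp add: sum_distrib_left algebra_simps)
qed simp

lemma horner_map_upt: "horner (map a [0..<N]) x = (\<Sum>n<N. a n * x^n)"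
  by (simp add: horner_eq_sum)

text \<open>Rounding outward to a multiple of \<open>2^-p\<close> after every Horner step keeps the numerals
  small enough for the simplifier to evaluate the bounds exactly.\<close>

fun horner_upper :: "nat \<Rightarrow> real list \<Rightarrow> real \<Rightarrow> real" where
  "horner_upper p [] x = 0"
| "horner_upper p (a # as) x = \<lceil>(a + x * horner_upper p as x) * 2^p\<rceil> / 2^p"

fun horner_lower :: "nat \<Rightarrow> real list \<Rightarrow> real \<Rightarrow> real" where
  "horner_lower p [] x = 0"
| "horner_lower p (a # as) x = \<lfloor>(a + x * horner_lower p as x) * 2^p\<rfloor> / 2^p"

lemma horner_le_horner_upper: "0 \<le> x \<Longrightarrow> horner as x \<le> horner_upper p as x"
proof (induction as)
  case (Cons a as)
  have "a + x * horner as x \<le> a + x * horner_upper p as x"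
    using Cons by (simp add: mult_left_mono)
  also have "\<dots> \<le> \<lceil>(a + x * horner_upper p as x) * 2^p\<rceil> / 2^p"
    by (simp add: pos_le_divide_eq)
  finally show ?case
    by simp
qed simp

lemma horner_lower_le_horner: "0 \<le> x \<Longrightarrow> horner_lower p as x \<le> horner as x"
proof (induction as)
  case (Cons a as)
  have "\<lfloor>(a + x * horner_lower p as x) * 2^p\<rfloor> / 2^p \<le> a + x * horner_lower p as x"
    by (simp add: pos_divide_le_eq)
  also have "\<dots> \<le> a + x * horner as x"
    using Cons by (simp add: mult_left_mono)
  finally show ?case
    by simp
qed simp

definition Gamma_num :: "real \<Rightarrow> real" where
  "Gamma_num k = (let s = sinh k; c = cosh k in
     k^3 * (64*s^8 + 144*s^6 + 144*s^4 + 94*s^2 + 9)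
     - k^2*c*s*(24*s^4 + 40*s^2 + 27)
     + k*s^2*(1+s^2)*(48*s^6 + 40*s^4 + 2*s^2 + 27)
     - c*s^3*(1+s^2)*(40*s^4 + 56*s^2 + 9))"

lemma Gamma0_eq: "Gamma0 k = k^3 / (8 * cosh k * sinh k * D_den k) * Gamma_num k"
  unfolding Gamma0_def Gamma_num_def Let_def by simp

text \<open>Expanding \<open>sinh k^j\<close>, \<open>cosh k * sinh k^j\<close> into \<open>sinh (m k)\<close>, \<open>cosh (m k)\<close>
  gives these representations of \<open>N\<close> and \<open>D\<close>.\<close>

definition num_blocks :: "hyp_block list" where
  "num_blocks = [(0, 0, -7/4, 0, -23/4), (2, -11/32, -1/16, -29/8, 29/4), (4, 1/8, 15/8, -1, 5/2),
     (6, 23/128, 1/64, -3/8, 1/4), (8, -1/16, -1/8, 0, 1/4), (10, -5/128, 3/64, 0, 0)]"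

definition den_blocks :: "hyp_block list" where
  "den_blocks = [(0, 0, 0, 0, -1/2), (2, 3/64, -3/32, -3/4, 1/2), (4, 0, 0, 0, 1/2),
     (6, -1/64, 3/32, 0, 0)]"

lemma exp_numeral_mult: "exp (numeral j * x :: real) = exp x ^ numeral j"
  using exp_of_nat_mult[of "numeral j" x] by simp

lemma exp_minus_numeral_mult: "exp (-(numeral j * x :: real)) = exp (-x) ^ numeral j"
  by (metis exp_numeral_mult mult_minus_right)

lemma sinh_cosh_exp_relations:
  "exp x * exp (-x) = 1" "2 * sinh x = exp x - exp (-x)" "2 * cosh x = exp x + exp (-x)"
  for x :: real
  by (simp_all add: exp_minus_inverse sinh_field_def cosh_field_def)

lemma Gamma_num_eq_blocks: "Gamma_num k = blocks_fun num_blocks k"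
  using sinh_cosh_exp_relations[of k]
  unfolding Gamma_num_def Let_def blocks_fun_def num_blocks_def block_fun_def hyp_term_def
  by (simp only: exp_numeral_mult exp_minus_numeral_mult mult_zero_left minus_zero exp_zero
      list.map sum_list.Cons sum_list.Nil prod.case) algebra

lemma D_den_eq_blocks: "D_den k = blocks_fun den_blocks k"
  using sinh_cosh_exp_relations[of k]
  unfolding D_den_def Let_def blocks_fun_def den_blocks_def block_fun_def hyp_term_def
  by (simp only: exp_numeral_mult exp_minus_numeral_mult mult_zero_left minus_zero exp_zero
      list.map sum_list.Cons sum_list.Nil prod.case) algebra

lemma num_block_weights_nonneg:
  assumes "11 \<le> n" "b \<in> set num_blocks"
  shows "0 \<le> block_weight b n"
proof -
  define t where "t = real n - 11"
  have n: "real n = t + 11" "0 \<le> t"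
    using assms(1) by (simp_all add: t_def)
  note shifted = block_weight_nonneg[OF _ n]
  have "0 \<le> block_weight (0, 0, -7/4, 0, -23/4) n"
    using assms(1) by (simp add: block_weight_def power_0_left)
  moreover have "0 \<le> block_weight (2, -11/32, -1/16, -29/8, 29/4) n"
    by (rule shifted[where dA = "12749/2" and dB = "8061/4" and dC = "841/4" and dD = "29/4"])
      (simp_all add: field_simps power2_eq_square power3_eq_cube)
  moreover have "0 \<le> block_weight (4, 1/8, 15/8, -1, 5/2) n"
    by (rule shifted[where dA = 2373 and dB = "1387/2" and dC = 71 and dD = "5/2"])
      (simp_all add: field_simps power2_eq_square power3_eq_cube)
  moreover have "0 \<le> block_weight (6, 23/128, 1/64, -3/8, 1/4) n"
    by (rule shifted[where dA = 45 and dB = "449/16" and dC = "21/4" and dD = "1/4"])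
      (simp_all add: field_simps power2_eq_square power3_eq_cube)
  moreover have "0 \<le> block_weight (8, -1/16, -1/8, 0, 1/4) n"
    by (rule shifted[where dA = "255/2" and dB = "267/4" and dC = "15/2" and dD = "1/4"])
      (simp_all add: field_simps power2_eq_square power3_eq_cube)
  moreover have "0 \<le> block_weight (10, -5/128, 3/64, 0, 0) n"
    by (rule shifted[where dA = "25/2" and dB = "75/16" and dC = 0 and dD = 0])
      (simp_all add: field_simps power2_eq_square power3_eq_cube)
  ultimately show ?thesis
    using assms(2) by (auto simp: num_blocks_def)
qed

lemma den_block_weights_nonneg:
  assumes "6 \<le> n" "b \<in> set den_blocks"
  shows "0 \<le> block_weight b n"
proof -
  define t where "t = real n - 6"
  have n: "real n = t + 6" "0 \<le> t"
    using assms(1) by (simp_all add: t_def)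
  note shifted = block_weight_nonneg[OF _ n]
  have "0 \<le> block_weight (0, 0, 0, 0, -1/2) n"
    using assms(1) by (simp add: block_weight_def power_0_left)
  moreover have "0 \<le> block_weight (2, 3/64, -3/32, -3/4, 1/2) n"
    by (rule shifted[where dA = "105/8" and dB = "161/8" and dC = 6 and dD = "1/2"])
      (simp_all add: field_simps power2_eq_square power3_eq_cube)
  moreover have "0 \<le> block_weight (4, 0, 0, 0, 1/2) n"
    by (rule shifted[where dA = 60 and dB = 37 and dC = "15/2" and dD = "1/2"])
      (simp_all add: field_simps power2_eq_square power3_eq_cube)
  moreover have "0 \<le> block_weight (6, -1/64, 3/32, 0, 0) n"
    by (rule shifted[where dA = "135/8" and dB = "27/8" and dC = 0 and dD = 0])
      (simp_all add: field_simps power2_eq_square power3_eq_cube)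
  ultimately show ?thesis
    using assms(2) by (auto simp: den_blocks_def)
qed

lemma num_coeffs:
  "map (blocks_coeff num_blocks) [0..<29] = [0, 0, 0, 0, 0, 0, 0, -16, 0, 3616/45, 0, 171488/945,
     0, 2481856/14175, 0, 34940512/334125, 0, 9392214976/212837625, 0, 5413552576/383107725,
     0, 55613316224/15471658125, 0, 16241315586784/21655164155625,
     0, 156485582563136/1191034028559375, 0, 43633375042650688/2218896395206115625, 0]"
  by (simp add: upt_rec blocks_coeff_def num_blocks_def block_coeff_def hyp_term_coeff_def
      fact_numeral)

lemma num_coeff_nonneg:
  assumes "n \<noteq> 7"
  shows "0 \<le> blocks_coeff num_blocks n"
proof (cases "11 \<le> n")
  case True
  then show ?thesis
    by (intro blocks_coeff_nonneg num_block_weights_nonneg) auto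
next
  case False
  then have "n \<in> {0, 1, 2, 3, 4, 5, 6, 8, 9, 10}"
    using assms by simp presburger
  moreover have "blocks_coeff num_blocks n = map (blocks_coeff num_blocks) [0..<29] ! n"
    using False by (simp add: nth_map_upt)
  ultimately show ?thesis
    unfolding num_coeffs by auto
qed

lemma num_coeff_below_7: "n < 7 \<Longrightarrow> blocks_coeff num_blocks n = 0"
proof -
  assume "n < 7"
  then have "n \<in> {0, 1, 2, 3, 4, 5, 6}"
    and "blocks_coeff num_blocks n = map (blocks_coeff num_blocks) [0..<29] ! n"
    by (auto simp: nth_map_upt)
  then show ?thesis
    unfolding num_coeffs by auto
qed

lemma Gamma_num_sums: "(\<lambda>n. blocks_coeff num_blocks n * k^n) sums Gamma_num k"
  using blocks_sums by (simp add: Gamma_num_eq_blocks)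

lemma D_den_pos:
  assumes "0 < k"
  shows "0 < D_den k"
proof (rule sums_pos_of_nonneg_coeffs)
  show "(\<lambda>n. blocks_coeff den_blocks n * k^n) sums D_den k"
    using blocks_sums by (simp add: D_den_eq_blocks)
  have coeffs: "map (blocks_coeff den_blocks) [0..<6] = [0, 0, 0, 0, 0, 16]"
    by (simp add: upt_rec blocks_coeff_def den_blocks_def block_coeff_def hyp_term_coeff_def
        fact_numeral)
  show "0 \<le> blocks_coeff den_blocks n" for n
  proof (cases "6 \<le> n")
    case False
    then have "n \<in> {0, 1, 2, 3, 4, 5}"
      and "blocks_coeff den_blocks n = map (blocks_coeff den_blocks) [0..<6] ! n"
      by (auto simp: nth_map_upt)
    then show ?thesis
      unfolding coeffs by auto
  qed (intro blocks_coeff_nonneg den_block_weights_nonneg; simp)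
  show "0 < blocks_coeff den_blocks 5"
    using arg_cong[OF coeffs, of "\<lambda>l. l ! 5"] by simp
qed (use assms in simp)

lemma Gamma_num_div_pow7_mono:
  assumes "0 < k" "k \<le> K"
  shows "Gamma_num k * K^7 \<le> Gamma_num K * k^7"
  using Gamma_num_sums Gamma_num_sums num_coeff_below_7 num_coeff_nonneg assms
  by (rule power_series_div_power_mono) simp_all

lemma Gamma_num_1_le: "Gamma_num 1 \<le> 10000"
proof -
  define s where "s = sinh (1::real)"
  have "s \<le> exp 1 / 2"
    by (simp add: s_def sinh_def)
  then have s_bounds: "0 \<le> s" "s \<le> 3/2"
    using exp_le by (simp_all add: s_def)
  have "0 \<le> cosh 1 * s * (24*s^4 + 40*s^2 + 27)"
    "0 \<le> cosh 1 * s^3 * (1+s^2) * (40*s^4 + 56*s^2 + 9)"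
    using s_bounds(1) by simp_all
  then have "Gamma_num 1 \<le> (64*s^8 + 144*s^6 + 144*s^4 + 94*s^2 + 9)
      + s^2*(1+s^2)*(48*s^6 + 40*s^4 + 2*s^2 + 27)"
    unfolding Gamma_num_def Let_def s_def[symmetric] by simp
  also have "\<dots> = 48*s^10 + 152*s^8 + 186*s^6 + 173*s^4 + 121*s^2 + 9"
    by (simp add: algebra_simps flip: power_add)
  also have "\<dots> \<le> 48*(3/2)^10 + 152*(3/2)^8 + 186*(3/2)^6 + 173*(3/2)^4 + 121*(3/2)^2 + 9"
    using s_bounds by (intro add_mono mult_left_mono power_mono order_refl) auto
  also have "\<dots> \<le> 10000"
    by (simp add: power_divide)
  finally show ?thesis .
qed

definition kappa_lower :: real where "kappa_lower = 380337/1000000"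
definition kappa_upper :: real where "kappa_upper = 380338/1000000"

lemma Gamma_num_kappa_lower_neg: "Gamma_num kappa_lower < 0"
proof -
  let ?c = "blocks_coeff num_blocks" and ?x = kappa_lower
  have x: "0 \<le> ?x" "?x \<le> 1"
    by (simp_all add: kappa_lower_def)
  have "(\<Sum>n<29. ?c n * ?x^n) = horner (map ?c [0..<29]) ?x"
    by (simp add: horner_map_upt)
  also have "\<dots> \<le> horner_upper 80 (map ?c [0..<29]) ?x"
    using x(1) by (rule horner_le_horner_upper)
  also have "\<dots> \<le> - 2/100000000"
    unfolding num_coeffs by (simp add: kappa_lower_def)
  finally have partial: "(\<Sum>n<29. ?c n * ?x^n) \<le> - 2/100000000" .
  have "-16 \<le> horner (map ?c [0..<29]) 1"
    unfolding num_coeffs by simp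
  then have "Gamma_num 1 - (\<Sum>n<29. ?c n) \<le> 10016"
    using Gamma_num_1_le by (simp add: horner_map_upt)
  then have "?x^29 * (Gamma_num 1 - (\<Sum>n<29. ?c n)) \<le> ?x^29 * 10016"
    by (simp add: kappa_lower_def)
  also have "\<dots> \<le> 1/100000000"
    by (simp add: kappa_lower_def power_divide)
  finally have tail: "?x^29 * (Gamma_num 1 - (\<Sum>n<29. ?c n)) \<le> 1/100000000" .
  have "?c sums Gamma_num 1"
    using Gamma_num_sums[of 1] by simp
  then have "Gamma_num ?x \<le> (\<Sum>n<29. ?c n * ?x^n) + ?x^29 * (Gamma_num 1 - (\<Sum>n<29. ?c n))"
    using Gamma_num_sums x num_coeff_nonneg by (intro sums_le_partial_sum_plus_tail) auto
  then show ?thesis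
    using partial tail by linarith
qed

lemma Gamma_num_kappa_upper_pos: "0 < Gamma_num kappa_upper"
proof -
  let ?c = "blocks_coeff num_blocks" and ?x = kappa_upper
  have x: "0 \<le> ?x"
    by (simp add: kappa_upper_def)
  have "0 < horner_lower 80 (map ?c [0..<29]) ?x"
    unfolding num_coeffs by (simp add: kappa_upper_def)
  also have "\<dots> \<le> horner (map ?c [0..<29]) ?x"
    using x by (rule horner_lower_le_horner)
  also have "\<dots> \<le> Gamma_num ?x"
    unfolding horner_map_upt using Gamma_num_sums x num_coeff_nonneg
    by (rule partial_sum_le_sums) simp
  finally show ?thesis .
qed

lemma Gamma_num_neg:
  assumes "0 < k" "k \<le> kappa_lower"
  shows "Gamma_num k < 0"
proof -
  have "Gamma_num k * kappa_lower^7 \<le> Gamma_num kappa_lower * k^7"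
    using assms by (rule Gamma_num_div_pow7_mono)
  also have "\<dots> < 0"
    using Gamma_num_kappa_lower_neg assms(1) by (simp add: mult_neg_pos)
  finally show ?thesis
    by (simp add: kappa_lower_def mult_less_0_iff)
qed

lemma Gamma_num_pos:
  assumes "kappa_upper \<le> k"
  shows "0 < Gamma_num k"
proof -
  have "0 < Gamma_num kappa_upper * k^7"
    using Gamma_num_kappa_upper_pos assms by (simp add: kappa_upper_def)
  also have "\<dots> \<le> Gamma_num k * kappa_upper^7"
    using assms by (intro Gamma_num_div_pow7_mono) (simp_all add: kappa_upper_def)
  finally show ?thesis
    by (simp add: kappa_upper_def zero_less_mult_iff)
qed

theorem lemma4p11:
  fixes k :: real
  assumes "k > 0"
    and "k \<notin> {0.380337<..<0.380338}"
  shows "Gamma0 k \<noteq> 0"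
proof -
  have "k \<le> kappa_lower \<or> kappa_upper \<le> k"
    using assms(2) by (auto simp: kappa_lower_def kappa_upper_def)
  then have "Gamma_num k \<noteq> 0"
    using Gamma_num_neg Gamma_num_pos assms(1) by fastforce
  moreover have "k^3 / (8 * cosh k * sinh k * D_den k) \<noteq> 0"
    using assms(1) D_den_pos[OF assms(1)] by simp
  ultimately show ?thesis
    unfolding Gamma0_eq by simp
qed

end
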